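(* Let $(\mathcal{X},d)$ be a Polish space and $\mu$ a Borel probability measure on $\mathcal{X}$. For $a>0$ define $F_a(\nu)=\sqrt{aH(\nu|\mu)}-W_2(\nu,\mu)$ for $\nu\in\mathcal{P}_\mu(\mathcal{X})$, and let $\mathrm{Argmin}(F_a)$ denote the (possibly empty) set of $\underline{\nu}\in\mathcal{P}_\mu(\mathcal{X})$ such that $F_a(\underline{\nu})=\inf_{\nu\in\mathcal{P}_\mu(\mathcal{X})}F_a(\nu)$. Then: (1) $F_a$ is bounded from below on $\mathcal{P}_\mu(\mathcal{X})$ as soon as $\iint e^{d^2(x,y)/a}\,\mu(dx)\mu(dy)<\infty$. (2) $\mu$ satisfies $\mathbf{T}_2(a)$ if and only if $\mu\in\mathrm{Argmin}(F_a)$. (3) $\mu$ satisfies $\mathbf{T}_2(a)$ if and only if $\mathrm{Argmin}(F_{a'})=\{\mu\}$ for all $a'>a$.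
   Context: $\mathcal{P}(\mathcal{X})$ is the set of Borel probability measures on $\mathcal{X}$. The relative entropy is $H(\nu|\mu)=\int\log(d\nu/d\mu)\,d\nu$ if $\nu\ll\mu$ and $+\infty$ otherwise; $\mathcal{P}_\mu(\mathcal{X})=\{\nu\in\mathcal{P}(\mathcal{X}):H(\nu|\mu)<\infty\}$. $W_2^2(\nu,\mu)=\inf_\pi\iint d^2(x,y)\,\pi(dxdy)\in[0,\infty]$, the infimum over all couplings $\pi$ of $\nu$ and $\mu$. A probability $\mu$ satisfies $\mathbf{T}_2(C)$ ($C>0$) if $W_2(\nu,\mu)\le\sqrt{C\,H(\nu|\mu)}$ for every $\nu\in\mathcal{P}(\mathcal{X})$. *)

theory Defs
  imports "HOL-Probability.Probability"
begin

definition Pr :: "'a::topological_space measure set" where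
  "Pr = {\<nu>. prob_space \<nu> \<and> sets \<nu> = sets borel}"

definition rel_entropy :: "'a measure \<Rightarrow> 'a measure \<Rightarrow> ereal" where
  "rel_entropy \<nu> \<mu> =
     (if absolutely_continuous \<mu> \<nu> then
        enn2ereal (\<integral>\<^sup>+ x. ennreal (ln (enn2real (RN_deriv \<mu> \<nu> x))) \<partial>\<nu>)
        - enn2ereal (\<integral>\<^sup>+ x. ennreal (- ln (enn2real (RN_deriv \<mu> \<nu> x))) \<partial>\<nu>)
      else \<infinity>)"

definition Pr_fin :: "'a::topological_space measure \<Rightarrow> 'a measure set" where
  "Pr_fin \<mu> = {\<nu> \<in> Pr. rel_entropy \<nu> \<mu> < \<infinity>}"

definition couplings :: "'a::topological_space measure \<Rightarrow> 'a measure \<Rightarrow> ('a \<times> 'a) measure set" where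
  "couplings \<nu> \<mu> = {\<pi>. sets \<pi> = sets (borel \<Otimes>\<^sub>M borel) \<and>
       distr \<pi> borel fst = \<nu> \<and> distr \<pi> borel snd = \<mu>}"

definition W2sq :: "'a::metric_space measure \<Rightarrow> 'a measure \<Rightarrow> ennreal" where
  "W2sq \<nu> \<mu> = (INF \<pi> \<in> couplings \<nu> \<mu>. \<integral>\<^sup>+ p. ennreal ((dist (fst p) (snd p))\<^sup>2) \<partial>\<pi>)"

definition W2 :: "'a::metric_space measure \<Rightarrow> 'a measure \<Rightarrow> ereal" where
  "W2 \<nu> \<mu> = (if W2sq \<nu> \<mu> = \<top> then \<infinity> else ereal (sqrt (enn2real (W2sq \<nu> \<mu>))))"

text \<open>Transport inequality T_2(C): W_2(nu,mu) \<le> sqrt(C H(nu|mu)) for all nu,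
  stated in the equivalent squared form W_2^2 \<le> C H (both sides in [0, infinity]).\<close>
definition T2 :: "real \<Rightarrow> 'a::metric_space measure \<Rightarrow> bool" where
  "T2 C \<mu> \<longleftrightarrow> (\<forall>\<nu> \<in> Pr. enn2ereal (W2sq \<nu> \<mu>) \<le> ereal C * rel_entropy \<nu> \<mu>)"

text \<open>F_a(nu) = sqrt(a H(nu|mu)) - W_2(nu,mu), for nu in P_mu (so H finite).\<close>
definition F :: "real \<Rightarrow> 'a::metric_space measure \<Rightarrow> 'a measure \<Rightarrow> ereal" where
  "F a \<mu> \<nu> = ereal (sqrt (a * real_of_ereal (rel_entropy \<nu> \<mu>))) - W2 \<nu> \<mu>"

definition Argmin :: "real \<Rightarrow> 'a::metric_space measure \<Rightarrow> 'a measure set" where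
  "Argmin a \<mu> = {\<nu> \<in> Pr_fin \<mu>. F a \<mu> \<nu> = (INF \<nu>' \<in> Pr_fin \<mu>. F a \<mu> \<nu>')}"

end

theory Submission
  imports Defs
begin

(* Integrating the Fenchel-Young inequality  u d <= a u ln u + a exp (d / a)  against the
   independent coupling of nu and mu gives  W_2^2(nu,mu) <= a H(nu|mu) + a Z,  where Z is the
   exponential double integral; hence  F_a >= - sqrt (a Z).  Since F_a(mu) = 0, mu minimises F_a
   exactly when F_a >= 0 on P_mu, which is T_2(a).  If T_2(a) holds and a' > a, a minimiser nu
   of F_a' satisfies  a' H = W_2^2 <= a H,  so H = 0 and nu = mu; conversely T_2(a') for all
   a' > a passes to the limit a' -> a. *)

lemma xlnx_ge_x_minus_one:
  fixes u :: real
  assumes "0 \<le> u"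
  shows "u - 1 \<le> u * ln u"
proof (cases "u = 0")
  case False
  with assms have u: "0 < u" by simp
  have "ln (1 / u) \<le> 1 / u - 1" using u by (intro ln_le_minus_one) simp
  then have "u * (- ln u) \<le> u * (1 / u - 1)" using u by (intro mult_left_mono) (simp_all add: ln_div)
  also have "\<dots> = 1 - u" using u by (simp add: field_simps)
  finally show ?thesis by simp
qed simp

lemma xlnx_eq_x_minus_one_imp:
  fixes u :: real
  assumes "0 \<le> u" and "u * ln u = u - 1"
  shows "u = 1"
proof (cases "u = 0")
  case False
  with assms have u: "0 < u" by simp
  have "ln (1 / u) = 1 / u - 1" using assms u by (simp add: ln_div field_simps)
  then have "1 / u = 1" using u by (intro ln_eq_minus_one) simp_all
  then show ?thesis by simp
qed (use assms in simp)

lemma fenchel_young_xlnx_exp: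
  fixes u d a :: real
  assumes "0 \<le> u" and "0 < a"
  shows "u * d \<le> a * (u * ln u) + a * exp (d / a)"
proof (cases "u = 0")
  case False
  with assms have u: "0 < u" by simp
  have "1 + (d / a - ln u) \<le> exp (d / a - ln u)" by (rule exp_ge_add_one_self)
  also have "\<dots> = exp (d / a) / u" using u by (simp add: exp_diff)
  finally have "u * (1 + (d / a - ln u)) \<le> exp (d / a)" using u by (simp add: field_simps)
  then have "a * (u * (1 + (d / a - ln u))) \<le> a * exp (d / a)" using assms by simp
  moreover have "a * (u * (1 + (d / a - ln u))) = a * u + u * d - a * (u * ln u)"
    using assms by (simp add: field_simps)
  moreover have "0 \<le> a * u" using assms by simp
  ultimately show ?thesis by linarith
qed (use assms in simp)

lemma ennreal_add_eq_neg_part_add: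
  fixes x y :: real
  assumes "0 \<le> y" and "0 \<le> x + y"
  shows "ennreal x + ennreal y = ennreal (- x) + ennreal (x + y)"
proof (cases "0 \<le> x")
  case False
  then have "ennreal (- x) + ennreal (x + y) = ennreal y"
    using assms by (subst ennreal_plus[symmetric]) simp_all
  then show ?thesis using False by (simp add: ennreal_neg)
qed (use assms in \<open>simp add: ennreal_neg\<close>)

lemma ennreal_add_neg_part_le:
  fixes x y z :: real
  assumes "0 \<le> x" and "0 \<le> z" and "x \<le> y + z"
  shows "ennreal x + ennreal (- y) \<le> ennreal y + ennreal z"
proof (cases "0 \<le> y")
  case True
  then show ?thesis
    using assms by (simp add: ennreal_neg ennreal_plus[symmetric] del: ennreal_plus)
next
  case False
  then have "ennreal x + ennreal (- y) = ennreal (x - y)"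
    using assms by (subst ennreal_plus[symmetric]) simp_all
  also have "\<dots> \<le> ennreal z" using assms by (intro ennreal_leI) simp
  finally show ?thesis using False by (simp add: ennreal_neg)
qed

locale abs_cont_prob_pair = M: prob_space \<mu> + V: prob_space \<nu> for \<mu> \<nu> :: "'a measure" +
  assumes sets_eq: "sets \<nu> = sets \<mu>" and abs_cont: "absolutely_continuous \<mu> \<nu>"
begin

(* ent_pos and ent_neg are the two integrals in the definition of rel_entropy, rewritten as
   integrals against mu through the density (rel_entropy_eq). *)
definition dens :: "'a \<Rightarrow> real" where
  "dens x = enn2real (RN_deriv \<mu> \<nu> x)"

definition ent_pos :: ennreal where
  "ent_pos = (\<integral>\<^sup>+ x. ennreal (dens x * ln (dens x)) \<partial>\<mu>)"

definition ent_neg :: ennreal where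
  "ent_neg = (\<integral>\<^sup>+ x. ennreal (- (dens x * ln (dens x))) \<partial>\<mu>)"

lemma dens_measurable[measurable]: "dens \<in> borel_measurable \<mu>"
  unfolding dens_def by measurable

lemma dens_nonneg: "0 \<le> dens x"
  unfolding dens_def by simp

lemma density_dens: "density \<mu> (\<lambda>x. ennreal (dens x)) = \<nu>"
proof -
  have "AE x in \<mu>. RN_deriv \<mu> \<nu> x \<noteq> \<infinity>"
    using M.RN_deriv_finite[OF V.sigma_finite_measure_axioms abs_cont sets_eq] .
  then have "density \<mu> (\<lambda>x. ennreal (dens x)) = density \<mu> (RN_deriv \<mu> \<nu>)"
    by (intro density_cong) (auto simp: dens_def top.not_eq_extremum)
  also have "\<dots> = \<nu>" using M.density_RN_deriv[OF abs_cont sets_eq] .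
  finally show ?thesis .
qed

lemma nn_integral_nu:
  assumes "g \<in> borel_measurable \<mu>"
  shows "(\<integral>\<^sup>+ x. g x \<partial>\<nu>) = (\<integral>\<^sup>+ x. ennreal (dens x) * g x \<partial>\<mu>)"
  by (subst density_dens[symmetric]) (simp add: nn_integral_density assms)

lemma nn_integral_dens: "(\<integral>\<^sup>+ x. ennreal (dens x) \<partial>\<mu>) = 1"
  using nn_integral_nu[of "\<lambda>_. 1"] V.emeasure_space_1 by simp

lemma rel_entropy_eq: "rel_entropy \<nu> \<mu> = enn2ereal ent_pos - enn2ereal ent_neg"
proof -
  have "(\<integral>\<^sup>+ x. ennreal (c * ln (dens x)) \<partial>\<nu>) = (\<integral>\<^sup>+ x. ennreal (c * (dens x * ln (dens x))) \<partial>\<mu>)"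
    for c :: real
    by (subst nn_integral_nu)
      (auto intro!: nn_integral_cong simp: ennreal_mult'[symmetric] dens_nonneg mult.left_commute)
  from this[of 1] this[of "-1"] show ?thesis
    using abs_cont by (simp add: rel_entropy_def ent_pos_def ent_neg_def dens_def)
qed

lemma ent_neg_le_one: "ent_neg \<le> 1"
proof -
  have "- (dens x * ln (dens x)) \<le> 1" for x
    using xlnx_ge_x_minus_one[OF dens_nonneg[of x]] dens_nonneg[of x] by linarith
  then have "ent_neg \<le> (\<integral>\<^sup>+ x. 1 \<partial>\<mu>)"
    unfolding ent_neg_def by (intro nn_integral_mono) simp
  then show ?thesis using M.emeasure_space_1 by simp
qed

lemma ent_neg_finite: "ent_neg \<noteq> \<top>"
  using ent_neg_le_one by (auto simp: top_unique)

lemma ent_pos_add_one: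
  "ent_pos + 1 = ent_neg + 1 + (\<integral>\<^sup>+ x. ennreal (dens x * ln (dens x) - dens x + 1) \<partial>\<mu>)"
proof -
  have "ent_pos + 1 = (\<integral>\<^sup>+ x. ennreal (dens x * ln (dens x)) + ennreal 1 \<partial>\<mu>)"
    unfolding ent_pos_def by (subst nn_integral_add) (simp_all add: M.emeasure_space_1)
  also have "\<dots> = (\<integral>\<^sup>+ x. ennreal (- (dens x * ln (dens x))) + ennreal (dens x)
      + ennreal (dens x * ln (dens x) - dens x + 1) \<partial>\<mu>)"
  proof (intro nn_integral_cong)
    fix x
    have defect: "0 \<le> dens x * ln (dens x) - dens x + 1"
      using xlnx_ge_x_minus_one[OF dens_nonneg[of x]] by linarith
    have "ennreal (dens x * ln (dens x)) + ennreal 1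
        = ennreal (- (dens x * ln (dens x))) + ennreal (dens x * ln (dens x) + 1)"
      using defect dens_nonneg[of x] by (intro ennreal_add_eq_neg_part_add) simp_all
    also have "ennreal (dens x * ln (dens x) + 1)
        = ennreal (dens x) + ennreal (dens x * ln (dens x) - dens x + 1)"
      using defect dens_nonneg[of x] by (subst ennreal_plus[symmetric]) simp_all
    finally show "ennreal (dens x * ln (dens x)) + ennreal 1 = ennreal (- (dens x * ln (dens x)))
        + ennreal (dens x) + ennreal (dens x * ln (dens x) - dens x + 1)"
      by (simp only: add.assoc)
  qed
  also have "\<dots> = ent_neg + 1 + (\<integral>\<^sup>+ x. ennreal (dens x * ln (dens x) - dens x + 1) \<partial>\<mu>)"
    by (simp add: nn_integral_add ent_neg_def nn_integral_dens)
  finally show ?thesis .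
qed

lemma ent_neg_le_ent_pos: "ent_neg \<le> ent_pos"
proof -
  have "1 + ent_neg \<le> 1 + ent_pos"
    by (simp only: add.commute[of 1] ent_pos_add_one) simp
  then show ?thesis by (simp add: ennreal_add_left_cancel_le)
qed

lemma eq_if_ent_pos_eq_ent_neg:
  assumes "ent_pos = ent_neg"
  shows "\<nu> = \<mu>"
proof -
  have "(ent_neg + 1) + 0 = (ent_neg + 1) + (\<integral>\<^sup>+ x. ennreal (dens x * ln (dens x) - dens x + 1) \<partial>\<mu>)"
    using ent_pos_add_one assms by simp
  moreover have "ent_neg + 1 \<noteq> \<top>" using ent_neg_finite by simp
  ultimately have "(\<integral>\<^sup>+ x. ennreal (dens x * ln (dens x) - dens x + 1) \<partial>\<mu>) = 0"
    by (simp only: ennreal_add_left_cancel) simp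
  then have "AE x in \<mu>. ennreal (dens x * ln (dens x) - dens x + 1) = 0"
    by (subst (asm) nn_integral_0_iff_AE) measurable
  then have "AE x in \<mu>. ennreal (dens x) = 1"
  proof eventually_elim
    case (elim x)
    then have "dens x * ln (dens x) - dens x + 1 \<le> 0" by (simp add: ennreal_eq_0_iff)
    then have "dens x * ln (dens x) = dens x - 1"
      using xlnx_ge_x_minus_one[OF dens_nonneg[of x]] by linarith
    then show ?case using xlnx_eq_x_minus_one_imp[OF dens_nonneg] by simp
  qed
  then have "density \<mu> (\<lambda>x. ennreal (dens x)) = density \<mu> (\<lambda>_. 1)"
    by (intro density_cong) auto
  then show ?thesis by (simp add: density_dens density_1)
qed

lemma nn_integral_nu_le_entropy:
  assumes g: "g \<in> borel_measurable \<mu>" "\<And>x. 0 \<le> g x" and a: "0 < a"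
  shows "(\<integral>\<^sup>+ x. ennreal (g x) \<partial>\<nu>) + ennreal a * ent_neg
    \<le> ennreal a * ent_pos + ennreal a * (\<integral>\<^sup>+ x. ennreal (exp (g x / a)) \<partial>\<mu>)"
proof -
  have "ennreal a * ent_neg = (\<integral>\<^sup>+ x. ennreal (- (a * (dens x * ln (dens x)))) \<partial>\<mu>)"
    using a by (simp add: ent_neg_def nn_integral_cmult[symmetric] ennreal_mult'[symmetric])
  moreover have "(\<integral>\<^sup>+ x. ennreal (g x) \<partial>\<nu>) = (\<integral>\<^sup>+ x. ennreal (dens x * g x) \<partial>\<mu>)"
    using g dens_nonneg by (simp add: nn_integral_nu ennreal_mult[symmetric])
  ultimately have "(\<integral>\<^sup>+ x. ennreal (g x) \<partial>\<nu>) + ennreal a * ent_neg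
      = (\<integral>\<^sup>+ x. ennreal (dens x * g x) + ennreal (- (a * (dens x * ln (dens x)))) \<partial>\<mu>)"
    using g by (simp add: nn_integral_add)
  also have "\<dots> \<le> (\<integral>\<^sup>+ x. ennreal (a * (dens x * ln (dens x))) + ennreal (a * exp (g x / a)) \<partial>\<mu>)"
  proof (rule nn_integral_mono)
    fix x
    show "ennreal (dens x * g x) + ennreal (- (a * (dens x * ln (dens x))))
        \<le> ennreal (a * (dens x * ln (dens x))) + ennreal (a * exp (g x / a))"
      using fenchel_young_xlnx_exp[OF dens_nonneg a, of x "g x"] dens_nonneg[of x] g(2)[of x] a
      by (intro ennreal_add_neg_part_le) simp_all
  qed
  also have "\<dots> = ennreal a * ent_pos + ennreal a * (\<integral>\<^sup>+ x. ennreal (exp (g x / a)) \<partial>\<mu>)"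
    using a g by (simp add: nn_integral_add ent_pos_def nn_integral_cmult ennreal_mult')
  finally show ?thesis .
qed

end

lemma abs_cont_prob_pairI:
  assumes "\<mu> \<in> Pr" and "\<nu> \<in> Pr" and "absolutely_continuous \<mu> \<nu>"
  shows "abs_cont_prob_pair \<mu> \<nu>"
proof -
  have "prob_space \<mu>" "prob_space \<nu>" "sets \<nu> = sets \<mu>"
    using assms(1,2) unfolding Pr_def by blast+
  then show ?thesis
    using assms(3) by (intro abs_cont_prob_pair.intro abs_cont_prob_pair_axioms.intro)
qed

lemma rel_entropy_nonneg:
  assumes "\<mu> \<in> Pr" and "\<nu> \<in> Pr"
  shows "0 \<le> rel_entropy \<nu> \<mu>"
proof (cases "absolutely_continuous \<mu> \<nu>")
  case True
  then interpret abs_cont_prob_pair \<mu> \<nu> using assms by (intro abs_cont_prob_pairI)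
  obtain n where n: "ent_neg = ennreal n" "0 \<le> n"
    using ent_neg_finite by (cases ent_neg) auto
  have "ereal n \<le> enn2ereal ent_pos"
    using ent_neg_le_ent_pos n by (simp add: less_eq_ennreal.rep_eq)
  then show ?thesis
    using n by (cases "enn2ereal ent_pos") (simp_all add: rel_entropy_eq)
qed (simp add: rel_entropy_def)

lemma rel_entropy_self:
  assumes "prob_space \<mu>"
  shows "rel_entropy \<mu> \<mu> = 0"
proof -
  interpret abs_cont_prob_pair \<mu> \<mu>
    by (rule abs_cont_prob_pair.intro[OF assms assms])
      (simp add: abs_cont_prob_pair_axioms_def absolutely_continuous_def)
  have "AE x in \<mu>. 1 = RN_deriv \<mu> \<mu> x"
    by (rule M.RN_deriv_unique) (simp_all add: density_1)
  then have ae: "AE x in \<mu>. dens x = 1"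
    by eventually_elim (simp add: dens_def)
  from ae have "AE x in \<mu>. ennreal (dens x * ln (dens x)) = 0"
    by eventually_elim simp
  then have pos: "ent_pos = (\<integral>\<^sup>+ x. 0 \<partial>\<mu>)"
    unfolding ent_pos_def by (rule nn_integral_cong_AE)
  from ae have "AE x in \<mu>. ennreal (- (dens x * ln (dens x))) = 0"
    by eventually_elim simp
  then have neg: "ent_neg = (\<integral>\<^sup>+ x. 0 \<partial>\<mu>)"
    unfolding ent_neg_def by (rule nn_integral_cong_AE)
  show ?thesis by (simp add: rel_entropy_eq pos neg)
qed

lemma eq_if_rel_entropy_eq_0:
  assumes "\<mu> \<in> Pr" and "\<nu> \<in> Pr" and H: "rel_entropy \<nu> \<mu> = 0"
  shows "\<nu> = \<mu>"
proof -
  from H have "absolutely_continuous \<mu> \<nu>" by (auto simp: rel_entropy_def split: if_splits)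
  then interpret abs_cont_prob_pair \<mu> \<nu> using assms by (intro abs_cont_prob_pairI)
  obtain n where n: "ent_neg = ennreal n" "0 \<le> n"
    using ent_neg_finite by (cases ent_neg) auto
  then have "enn2ereal ent_pos - ereal n = 0"
    using H by (simp add: rel_entropy_eq)
  then have "enn2ereal ent_pos = ereal n"
    by (cases "enn2ereal ent_pos") auto
  then have "enn2ereal ent_pos = enn2ereal ent_neg"
    using n by simp
  then show "\<nu> = \<mu>"
    by (intro eq_if_ent_pos_eq_ent_neg) (simp only: enn2ereal_inject)
qed

lemma measurable_Pr: "\<mu> \<in> Pr \<Longrightarrow> measurable \<mu> N = measurable borel N"
  by (intro measurable_cong_sets) (simp_all add: Pr_def)

lemma measurable_Pr_pair:
  "\<mu> \<in> Pr \<Longrightarrow> \<nu> \<in> Pr \<Longrightarrow> measurable (\<mu> \<Otimes>\<^sub>M \<nu>) N = measurable (borel \<Otimes>\<^sub>M borel) N"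
  by (intro measurable_cong_sets sets_pair_measure_cong) (simp_all add: Pr_def)

lemma (in prob_space) distr_pair_snd:
  assumes "sigma_finite_measure N"
  shows "distr (M \<Otimes>\<^sub>M N) N snd = N"
proof (intro measure_eqI)
  fix A assume A: "A \<in> sets (distr (M \<Otimes>\<^sub>M N) N snd)"
  then have "emeasure (distr (M \<Otimes>\<^sub>M N) N snd) A = emeasure (M \<Otimes>\<^sub>M N) (space M \<times> A)"
    by (auto simp: emeasure_distr space_pair_measure dest: sets.sets_into_space
        intro!: arg_cong2[where f = emeasure])
  with A assms show "emeasure (distr (M \<Otimes>\<^sub>M N) N snd) A = emeasure N A"
    by (simp add: sigma_finite_measure.emeasure_pair_measure_Times emeasure_space_1)
qed simp

lemma pair_measure_in_couplings:
  assumes "\<nu> \<in> Pr" and "\<mu> \<in> Pr"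
  shows "\<nu> \<Otimes>\<^sub>M \<mu> \<in> couplings \<nu> \<mu>"
proof -
  interpret M: prob_space \<mu> using assms by (simp add: Pr_def)
  interpret V: prob_space \<nu> using assms by (simp add: Pr_def)
  have sets: "sets \<nu> = sets borel" "sets \<mu> = sets borel" using assms by (simp_all add: Pr_def)
  have "distr (\<nu> \<Otimes>\<^sub>M \<mu>) borel fst = distr (\<nu> \<Otimes>\<^sub>M \<mu>) \<nu> fst"
    using sets by (intro distr_cong) simp_all
  moreover have "distr (\<nu> \<Otimes>\<^sub>M \<mu>) borel snd = distr (\<nu> \<Otimes>\<^sub>M \<mu>) \<mu> snd"
    using sets by (intro distr_cong) simp_all
  ultimately show ?thesis
    using M.distr_pair_fst V.distr_pair_snd[OF M.sigma_finite_measure_axioms]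
      sets_pair_measure_cong[OF sets]
    by (simp add: couplings_def)
qed

lemma W2sq_le_independent_coupling:
  fixes \<mu> \<nu> :: "'a::{metric_space, second_countable_topology} measure"
  assumes "\<nu> \<in> Pr" and "\<mu> \<in> Pr"
  shows "W2sq \<nu> \<mu> \<le> (\<integral>\<^sup>+ y. \<integral>\<^sup>+ x. ennreal ((dist x y)\<^sup>2) \<partial>\<nu> \<partial>\<mu>)"
proof -
  interpret pair_sigma_finite \<nu> \<mu>
    using assms by (intro pair_sigma_finite.intro prob_space_imp_sigma_finite) (simp_all add: Pr_def)
  have "(\<lambda>p. ennreal ((dist (fst p) (snd p))\<^sup>2)) \<in> borel_measurable (\<nu> \<Otimes>\<^sub>M \<mu>)"
    unfolding measurable_Pr_pair[OF assms] by measurable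
  then have "(\<integral>\<^sup>+ y. \<integral>\<^sup>+ x. ennreal ((dist x y)\<^sup>2) \<partial>\<nu> \<partial>\<mu>)
      = (\<integral>\<^sup>+ p. ennreal ((dist (fst p) (snd p))\<^sup>2) \<partial>(\<nu> \<Otimes>\<^sub>M \<mu>))"
    by (subst nn_integral_snd[symmetric]) simp_all
  moreover have "W2sq \<nu> \<mu> \<le> (\<integral>\<^sup>+ p. ennreal ((dist (fst p) (snd p))\<^sup>2) \<partial>(\<nu> \<Otimes>\<^sub>M \<mu>))"
    unfolding W2sq_def using pair_measure_in_couplings[OF assms] by (rule INF_lower)
  ultimately show ?thesis by simp
qed

lemma W2sq_self:
  fixes \<mu> :: "'a::{metric_space, second_countable_topology} measure"
  assumes "\<mu> \<in> Pr"
  shows "W2sq \<mu> \<mu> = 0"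
proof -
  have diag: "(\<lambda>x. (x, x)) \<in> measurable \<mu> (borel \<Otimes>\<^sub>M borel)"
    unfolding measurable_Pr[OF assms] by measurable
  define \<pi> where "\<pi> = distr \<mu> (borel \<Otimes>\<^sub>M borel) (\<lambda>x. (x, x))"
  have "distr \<pi> borel f = \<mu>" if "f = fst \<or> f = snd" for f :: "'a \<times> 'a \<Rightarrow> 'a"
  proof -
    have "distr \<pi> borel f = distr \<mu> borel (f \<circ> (\<lambda>x. (x, x)))"
      unfolding \<pi>_def using that by (intro distr_distr diag) auto
    also have "\<dots> = distr \<mu> borel (\<lambda>x. x)" using that by (auto simp: comp_def)
    also have "\<dots> = \<mu>" using assms by (intro distr_id2) (simp add: Pr_def)
    finally show ?thesis .
  qed
  then have "\<pi> \<in> couplings \<mu> \<mu>" by (simp add: couplings_def \<pi>_def)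
  then have "W2sq \<mu> \<mu> \<le> (\<integral>\<^sup>+ p. ennreal ((dist (fst p) (snd p))\<^sup>2) \<partial>\<pi>)"
    unfolding W2sq_def by (rule INF_lower)
  also have "\<dots> = 0"
    unfolding \<pi>_def by (subst nn_integral_distr[OF diag]) simp_all
  finally show ?thesis by simp
qed

lemma W2sq_add_ent_neg_le:
  fixes \<mu> \<nu> :: "'a::{metric_space, second_countable_topology} measure"
  assumes m: "\<mu> \<in> Pr" and n: "\<nu> \<in> Pr" and ac: "absolutely_continuous \<mu> \<nu>" and a: "0 < a"
  shows "W2sq \<nu> \<mu> + ennreal a * abs_cont_prob_pair.ent_neg \<mu> \<nu>
    \<le> ennreal a * abs_cont_prob_pair.ent_pos \<mu> \<nu>
      + ennreal a * (\<integral>\<^sup>+ x. \<integral>\<^sup>+ y. ennreal (exp ((dist x y)\<^sup>2 / a)) \<partial>\<mu> \<partial>\<mu>)"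
proof -
  interpret abs_cont_prob_pair \<mu> \<nu> using m n ac by (rule abs_cont_prob_pairI)
  define D where "D y = (\<integral>\<^sup>+ x. ennreal ((dist x y)\<^sup>2) \<partial>\<nu>)" for y
  define E where "E y = (\<integral>\<^sup>+ x. ennreal (exp ((dist x y)\<^sup>2 / a)) \<partial>\<mu>)" for y
  have "D \<in> borel_measurable \<mu>"
    unfolding D_def by (rule V.borel_measurable_nn_integral) (unfold measurable_Pr_pair[OF m n], measurable)
  have "E \<in> borel_measurable \<mu>"
    unfolding E_def by (rule M.borel_measurable_nn_integral) (unfold measurable_Pr_pair[OF m m], measurable)
  have D_le: "D y + ennreal a * ent_neg \<le> ennreal a * ent_pos + ennreal a * E y" for y
    unfolding D_def E_def using a
    by (intro nn_integral_nu_le_entropy[where g = "\<lambda>x. (dist x y)\<^sup>2"])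
      (simp_all add: measurable_Pr[OF m])
  have "W2sq \<nu> \<mu> + ennreal a * ent_neg \<le> (\<integral>\<^sup>+ y. D y \<partial>\<mu>) + ennreal a * ent_neg"
    using W2sq_le_independent_coupling[OF n m] by (simp add: D_def add_right_mono)
  also have "\<dots> = (\<integral>\<^sup>+ y. D y + ennreal a * ent_neg \<partial>\<mu>)"
    using \<open>D \<in> borel_measurable \<mu>\<close> by (simp add: nn_integral_add M.emeasure_space_1)
  also have "\<dots> \<le> (\<integral>\<^sup>+ y. ennreal a * ent_pos + ennreal a * E y \<partial>\<mu>)"
    by (intro nn_integral_mono D_le)
  also have "\<dots> = ennreal a * ent_pos + ennreal a * (\<integral>\<^sup>+ y. E y \<partial>\<mu>)"
    using \<open>E \<in> borel_measurable \<mu>\<close>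
    by (simp add: nn_integral_add nn_integral_cmult M.emeasure_space_1)
  also have "(\<integral>\<^sup>+ y. E y \<partial>\<mu>) = (\<integral>\<^sup>+ x. \<integral>\<^sup>+ y. ennreal (exp ((dist x y)\<^sup>2 / a)) \<partial>\<mu> \<partial>\<mu>)"
    by (simp add: E_def dist_commute)
  finally show ?thesis .
qed

lemma W2sq_le_rel_entropy:
  fixes \<mu> \<nu> :: "'a::{metric_space, second_countable_topology} measure"
  assumes m: "\<mu> \<in> Pr" and n: "\<nu> \<in> Pr" and H: "rel_entropy \<nu> \<mu> = ereal h" and a: "0 < a"
  shows "W2sq \<nu> \<mu> \<le> ennreal (a * h)
    + ennreal a * (\<integral>\<^sup>+ x. \<integral>\<^sup>+ y. ennreal (exp ((dist x y)\<^sup>2 / a)) \<partial>\<mu> \<partial>\<mu>)"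
    (is "_ \<le> _ + ennreal a * ?Z")
proof -
  have ac: "absolutely_continuous \<mu> \<nu>" using H by (auto simp: rel_entropy_def split: if_splits)
  interpret abs_cont_prob_pair \<mu> \<nu> using m n ac by (rule abs_cont_prob_pairI)
  obtain q where q: "ent_neg = ennreal q" "0 \<le> q"
    using ent_neg_finite by (cases ent_neg) auto
  have "ent_pos \<noteq> \<top>" using H by (auto simp: rel_entropy_eq q)
  then obtain p where p: "ent_pos = ennreal p" "0 \<le> p" by (cases ent_pos) auto
  have h: "h = p - q" using H by (simp add: rel_entropy_eq q p)
  have "W2sq \<nu> \<mu> + ennreal (a * q) \<le> ennreal (a * p) + ennreal a * ?Z"
    using W2sq_add_ent_neg_le[OF m n ac a] a by (simp add: q p ennreal_mult)
  also have "ennreal (a * p) = ennreal (a * h) + ennreal (a * q)"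
    using a q p ent_neg_le_ent_pos unfolding h
    by (simp add: ennreal_plus[symmetric] algebra_simps del: ennreal_plus)
  finally have "ennreal (a * q) + W2sq \<nu> \<mu> \<le> ennreal (a * q) + (ennreal (a * h) + ennreal a * ?Z)"
    by (simp add: ac_simps)
  then show ?thesis by (simp add: ennreal_add_left_cancel_le)
qed

lemma Pr_finE:
  assumes "\<mu> \<in> Pr" and "\<nu> \<in> Pr_fin \<mu>"
  obtains h where "\<nu> \<in> Pr" and "rel_entropy \<nu> \<mu> = ereal h" and "0 \<le> h"
proof -
  have "\<nu> \<in> Pr" and "rel_entropy \<nu> \<mu> < \<infinity>" using assms(2) by (simp_all add: Pr_fin_def)
  moreover have "0 \<le> rel_entropy \<nu> \<mu>" using rel_entropy_nonneg assms(1) calculation(1) .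
  ultimately show thesis using that by (cases "rel_entropy \<nu> \<mu>") auto
qed

lemma self_in_Pr_fin: "\<mu> \<in> Pr \<Longrightarrow> \<mu> \<in> Pr_fin \<mu>"
  by (simp add: Pr_fin_def Pr_def rel_entropy_self)

lemma F_eq:
  assumes "rel_entropy \<nu> \<mu> = ereal h" and "W2sq \<nu> \<mu> = ennreal w" and "0 \<le> w"
  shows "F a \<mu> \<nu> = ereal (sqrt (a * h) - sqrt w)"
  using assms by (simp add: F_def W2_def)

lemma F_eq_minus_infinity: "W2sq \<nu> \<mu> = \<top> \<Longrightarrow> F a \<mu> \<nu> = - \<infinity>"
  by (simp add: F_def W2_def)

lemma F_self:
  fixes \<mu> :: "'a::{metric_space, second_countable_topology} measure"
  assumes "\<mu> \<in> Pr"
  shows "F a \<mu> \<mu> = 0"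
  using assms F_eq[of \<mu> \<mu> 0 0] by (simp add: W2sq_self rel_entropy_self Pr_def)

lemma F_bounded_below:
  fixes \<mu> \<nu> :: "'a::{metric_space, second_countable_topology} measure"
  assumes m: "\<mu> \<in> Pr" and n: "\<nu> \<in> Pr_fin \<mu>" and a: "0 < a"
    and z: "(\<integral>\<^sup>+ x. \<integral>\<^sup>+ y. ennreal (exp ((dist x y)\<^sup>2 / a)) \<partial>\<mu> \<partial>\<mu>) = ennreal z" "0 \<le> z"
  shows "ereal (- sqrt (a * z)) \<le> F a \<mu> \<nu>"
proof -
  obtain h where "\<nu> \<in> Pr" and H: "rel_entropy \<nu> \<mu> = ereal h" and "0 \<le> h"
    using m n by (rule Pr_finE)
  have "W2sq \<nu> \<mu> \<le> ennreal (a * h + a * z)"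
    using W2sq_le_rel_entropy[OF m \<open>\<nu> \<in> Pr\<close> H a] a z \<open>0 \<le> h\<close> by (simp add: ennreal_mult)
  moreover have "0 \<le> a * h + a * z" using a z \<open>0 \<le> h\<close> by simp
  ultimately obtain w where w: "W2sq \<nu> \<mu> = ennreal w" "0 \<le> w" "w \<le> a * h + a * z"
    by (cases "W2sq \<nu> \<mu>") (auto simp: top_unique simp del: ennreal_plus)
  have "sqrt w \<le> sqrt (a * h + a * z)" using w by simp
  also have "\<dots> \<le> sqrt (a * h) + sqrt (a * z)"
    using a z \<open>0 \<le> h\<close> by (intro sqrt_add_le_add_sqrt) simp_all
  finally show ?thesis using F_eq[OF H w(1,2)] by simp
qed

lemma F_nonneg_iff:
  assumes "\<mu> \<in> Pr" and "\<nu> \<in> Pr_fin \<mu>"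
  shows "0 \<le> F a \<mu> \<nu> \<longleftrightarrow> enn2ereal (W2sq \<nu> \<mu>) \<le> ereal a * rel_entropy \<nu> \<mu>"
proof -
  obtain h where H: "rel_entropy \<nu> \<mu> = ereal h" using assms by (rule Pr_finE)
  show ?thesis
  proof (cases "W2sq \<nu> \<mu>")
    case (real w)
    then show ?thesis using F_eq[OF H] by (simp add: H)
  qed (simp add: F_eq_minus_infinity H)
qed

lemma T2_iff_Pr_fin:
  assumes "0 < a"
  shows "T2 a \<mu> \<longleftrightarrow> (\<forall>\<nu>\<in>Pr_fin \<mu>. enn2ereal (W2sq \<nu> \<mu>) \<le> ereal a * rel_entropy \<nu> \<mu>)"
proof -
  have "rel_entropy \<nu> \<mu> = \<infinity>" if "\<nu> \<in> Pr" "\<nu> \<notin> Pr_fin \<mu>" for \<nu>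
    using that by (simp add: Pr_fin_def top.not_eq_extremum)
  then show ?thesis using assms by (auto simp: T2_def Pr_fin_def)
qed

lemma T2_iff_F_nonneg:
  assumes "\<mu> \<in> Pr" and "0 < a"
  shows "T2 a \<mu> \<longleftrightarrow> (\<forall>\<nu>\<in>Pr_fin \<mu>. 0 \<le> F a \<mu> \<nu>)"
  using F_nonneg_iff[OF assms(1)] by (simp add: T2_iff_Pr_fin[OF assms(2)])

lemma self_in_Argmin_iff:
  fixes \<mu> :: "'a::{metric_space, second_countable_topology} measure"
  assumes "\<mu> \<in> Pr"
  shows "\<mu> \<in> Argmin a \<mu> \<longleftrightarrow> (\<forall>\<nu>\<in>Pr_fin \<mu>. 0 \<le> F a \<mu> \<nu>)"
proof -
  have "(INF \<nu> \<in> Pr_fin \<mu>. F a \<mu> \<nu>) \<le> 0"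
    using INF_lower[OF self_in_Pr_fin[OF assms], of "F a \<mu>"] F_self[OF assms] by simp
  then have "\<mu> \<in> Argmin a \<mu> \<longleftrightarrow> 0 \<le> (INF \<nu> \<in> Pr_fin \<mu>. F a \<mu> \<nu>)"
    using self_in_Pr_fin[OF assms] F_self[OF assms] by (auto simp: Argmin_def)
  then show ?thesis by (simp add: le_INF_iff)
qed

lemma T2_mono:
  fixes \<mu> :: "'a::metric_space measure"
  assumes "\<mu> \<in> Pr" and "T2 a \<mu>" and "0 \<le> a" and "a \<le> a'"
  shows "T2 a' \<mu>"
  unfolding T2_def
proof
  fix \<nu> :: "'a measure" assume "\<nu> \<in> Pr"
  then have "enn2ereal (W2sq \<nu> \<mu>) \<le> ereal a * rel_entropy \<nu> \<mu>" using assms(2) by (simp add: T2_def)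
  also have "\<dots> \<le> ereal a' * rel_entropy \<nu> \<mu>"
    using rel_entropy_nonneg[OF assms(1) \<open>\<nu> \<in> Pr\<close>] assms(3,4) by (intro ereal_mult_right_mono) simp_all
  finally show "enn2ereal (W2sq \<nu> \<mu>) \<le> ereal a' * rel_entropy \<nu> \<mu>" .
qed

lemma le_mult_if_le_mult_above:
  fixes w a h :: real
  assumes "0 \<le> h" and "\<And>a'. a < a' \<Longrightarrow> w \<le> a' * h"
  shows "w \<le> a * h"
proof (rule field_le_epsilon)
  fix e :: real assume "0 < e"
  with assms have "w \<le> (a + e / (h + 1)) * h" by simp
  also have "\<dots> = a * h + e * (h / (h + 1))" by (simp add: algebra_simps)
  also have "\<dots> \<le> a * h + e * 1"
    using \<open>0 < e\<close> assms(1) by (intro add_left_mono mult_left_mono) simp_all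
  finally show "w \<le> a * h + e" by simp
qed

lemma T2_if_T2_above:
  assumes "\<mu> \<in> Pr" and "0 < a" and "\<And>a'. a < a' \<Longrightarrow> T2 a' \<mu>"
  shows "T2 a \<mu>"
  unfolding T2_iff_Pr_fin[OF assms(2)]
proof
  fix \<nu> assume \<nu>: "\<nu> \<in> Pr_fin \<mu>"
  with assms(1) obtain h where H: "rel_entropy \<nu> \<mu> = ereal h" and "0 \<le> h"
    by (rule Pr_finE)
  have le: "enn2ereal (W2sq \<nu> \<mu>) \<le> ereal (a' * h)" if "a < a'" for a'
  proof -
    have "0 < a'" using assms(2) that by simp
    have "T2 a' \<mu>" using assms(3)[OF that] .
    then have "\<forall>\<nu>\<in>Pr_fin \<mu>. enn2ereal (W2sq \<nu> \<mu>) \<le> ereal a' * rel_entropy \<nu> \<mu>"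
      unfolding T2_iff_Pr_fin[OF \<open>0 < a'\<close>] .
    from bspec[OF this \<nu>] show ?thesis by (simp add: H)
  qed
  have "W2sq \<nu> \<mu> \<noteq> \<top>" using le[of "a + 1"] by (intro notI) simp
  then obtain w where w: "W2sq \<nu> \<mu> = ennreal w" "0 \<le> w" by (cases "W2sq \<nu> \<mu>") simp_all
  have "w \<le> a' * h" if "a < a'" for a' using le[OF that] w by simp
  with \<open>0 \<le> h\<close> have "w \<le> a * h" by (rule le_mult_if_le_mult_above)
  then show "enn2ereal (W2sq \<nu> \<mu>) \<le> ereal a * rel_entropy \<nu> \<mu>" by (simp add: w H)
qed

lemma Argmin_subset_self:
  fixes \<mu> :: "'a::{metric_space, second_countable_topology} measure"
  assumes m: "\<mu> \<in> Pr" and a: "0 < a" and T: "T2 a \<mu>" and "a < a'"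
  shows "Argmin a' \<mu> \<subseteq> {\<mu>}"
proof
  fix \<nu> assume "\<nu> \<in> Argmin a' \<mu>"
  have "0 < a'" using a \<open>a < a'\<close> by simp
  have "T2 a' \<mu>" using T2_mono[OF m T] a \<open>a < a'\<close> by simp
  then have "\<mu> \<in> Argmin a' \<mu>"
    unfolding self_in_Argmin_iff[OF m] T2_iff_F_nonneg[OF m \<open>0 < a'\<close>] .
  then have "(INF \<nu>' \<in> Pr_fin \<mu>. F a' \<mu> \<nu>') = 0"
    using F_self[OF m] by (simp add: Argmin_def)
  with \<open>\<nu> \<in> Argmin a' \<mu>\<close> have "F a' \<mu> \<nu> = 0" and \<nu>: "\<nu> \<in> Pr_fin \<mu>"
    by (simp_all add: Argmin_def)
  obtain h where "\<nu> \<in> Pr" and H: "rel_entropy \<nu> \<mu> = ereal h" and "0 \<le> h"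
    using m \<nu> by (rule Pr_finE)
  obtain w where w: "W2sq \<nu> \<mu> = ennreal w" "0 \<le> w"
    using \<open>F a' \<mu> \<nu> = 0\<close> by (cases "W2sq \<nu> \<mu>") (simp_all add: F_eq_minus_infinity)
  have "a' * h = w" using \<open>F a' \<mu> \<nu> = 0\<close> F_eq[OF H w] by simp
  moreover have "w \<le> a * h"
    using bspec[OF T[unfolded T2_iff_Pr_fin[OF a]] \<nu>] by (simp add: w H)
  ultimately have "(a' - a) * h \<le> 0" by (simp add: left_diff_distrib)
  then have "h = 0" using \<open>a < a'\<close> \<open>0 \<le> h\<close> by (simp add: mult_le_0_iff)
  then show "\<nu> \<in> {\<mu>}"
    using eq_if_rel_entropy_eq_0[OF m \<open>\<nu> \<in> Pr\<close>] H by (simp add: zero_ereal_def)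
qed

theorem lemma1p1:
  fixes \<mu> :: "'a::polish_space measure" and a :: real
  assumes "\<mu> \<in> Pr" and "a > 0"
  shows "((\<integral>\<^sup>+ x. \<integral>\<^sup>+ y. ennreal (exp ((dist x y)\<^sup>2 / a)) \<partial>\<mu> \<partial>\<mu>) < \<infinity>
           \<longrightarrow> (\<exists>c::real. \<forall>\<nu> \<in> Pr_fin \<mu>. ereal c \<le> F a \<mu> \<nu>))
       \<and> (T2 a \<mu> \<longleftrightarrow> \<mu> \<in> Argmin a \<mu>)
       \<and> (T2 a \<mu> \<longleftrightarrow> (\<forall>a'>a. Argmin a' \<mu> = {\<mu>}))"
proof -
  let ?Z = "\<integral>\<^sup>+ x. \<integral>\<^sup>+ y. ennreal (exp ((dist x y)\<^sup>2 / a)) \<partial>\<mu> \<partial>\<mu>"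
  have bounded: "\<exists>c::real. \<forall>\<nu> \<in> Pr_fin \<mu>. ereal c \<le> F a \<mu> \<nu>" if "?Z < \<infinity>"
  proof -
    from that obtain z where "?Z = ennreal z" and "0 \<le> z" by (cases ?Z) auto
    then have "\<forall>\<nu> \<in> Pr_fin \<mu>. ereal (- sqrt (a * z)) \<le> F a \<mu> \<nu>"
      using F_bounded_below[OF assms(1) _ assms(2)] by simp
    then show ?thesis by blast
  qed
  have T2_iff: "T2 b \<mu> \<longleftrightarrow> \<mu> \<in> Argmin b \<mu>" if "0 < b" for b
    by (simp add: T2_iff_F_nonneg[OF assms(1) that] self_in_Argmin_iff[OF assms(1)])
  have Argmin_singleton: "T2 a \<mu> \<longleftrightarrow> (\<forall>a'>a. Argmin a' \<mu> = {\<mu>})"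
  proof
    assume T: "T2 a \<mu>"
    show "\<forall>a'>a. Argmin a' \<mu> = {\<mu>}"
    proof (intro allI impI)
      fix a' assume "a < a'"
      then have "\<mu> \<in> Argmin a' \<mu>"
        using T2_iff[of a'] T2_mono[OF assms(1) T] assms(2) by simp
      with Argmin_subset_self[OF assms(1,2) T \<open>a < a'\<close>] show "Argmin a' \<mu> = {\<mu>}" by blast
    qed
  next
    assume A: "\<forall>a'>a. Argmin a' \<mu> = {\<mu>}"
    show "T2 a \<mu>"
    proof (rule T2_if_T2_above[OF assms])
      fix a' assume "a < a'"
      then show "T2 a' \<mu>" using A T2_iff[of a'] assms(2) by simp
    qed
  qed
  show ?thesis using bounded T2_iff[OF assms(2)] Argmin_singleton by simp
qed

end
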